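(* If $C$ is a free $E$-linear code of length $2n$, then $SHull(C)$ is also free.
   Context: $E=\langle \kappa,\tau \mid 2\kappa=2\tau=0,\ \kappa^2=\kappa,\ \tau^2=\tau,\ \kappa\tau=\kappa,\ \tau\kappa=\tau\rangle$ is the non-unital ring $\{0,\kappa,\tau,\zeta\}$, $\zeta=\kappa+\tau$, with $e\kappa=e\tau=e$, $e\zeta=0$ for all $e\in E$. Every $e\in E$ is uniquely $u\kappa+v\zeta$ ($u,v\in\mathbb{F}_2$); $\pi(u\kappa+v\zeta)=u$, componentwise. An $E$-linear code of length $2n$ is a left $E$-submodule $C\subseteq E^{2n}$; $C_{Res}=\pi(C)$, $C_{Tor}=\{v\in\mathbb{F}_2^{2n}:\zeta v\in C\}$ (componentwise, $0\cdot\zeta=0,1\cdot\zeta=\zeta$); $C$ is free if $C_{Res}=C_{Tor}$. Symplectic inner product: $\langle (u|v),(u'|v')\rangle_s=\sum_i u_iv'_i+\sum_i v_iu'_i$. $C^{\perp_S}=\{z\in E^{2n}:\langle z,w\rangle_s=\langle w,z\rangle_s=0\ \forall w\in C\}$, $SHull(C)=C\cap C^{\perp_S}$. *)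

theory Defs
  imports Main
begin

text \<open>The four-element non-unital ring E = {0, kappa, tau, zeta}, zeta = kappa + tau,
  characteristic 2, with e*kappa = e*tau = e and e*zeta = 0 for all e.\<close>

datatype E = EZero | Kap | Tau | Zeta

instantiation E :: comm_monoid_add
begin
definition zero_E :: E where "zero_E = EZero"
fun plus_E :: "E \<Rightarrow> E \<Rightarrow> E" where
  "plus_E EZero y = y"
| "plus_E x EZero = x"
| "plus_E Kap Kap = EZero"
| "plus_E Tau Tau = EZero"
| "plus_E Zeta Zeta = EZero"
| "plus_E Kap Tau = Zeta"
| "plus_E Tau Kap = Zeta"
| "plus_E Kap Zeta = Tau"
| "plus_E Zeta Kap = Tau"
| "plus_E Tau Zeta = Kap"
| "plus_E Zeta Tau = Kap"
instance
proof
  fix a b c :: E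
  show "a + b + c = a + (b + c)" by (cases a; cases b; cases c; simp)
  show "a + b = b + a" by (cases a; cases b; simp)
  show "0 + a = a" by (simp add: zero_E_def)
qed
end

instantiation E :: times
begin
fun times_E :: "E \<Rightarrow> E \<Rightarrow> E" where
  "times_E e Kap = e"
| "times_E e Tau = e"
| "times_E e Zeta = EZero"
| "times_E e EZero = EZero"
instance ..
end

text \<open>Residue map pi(u kappa + v zeta) = u (kappa = 1 kappa + 0 zeta, tau = 1 kappa + 1 zeta).\<close>
fun piE :: "E \<Rightarrow> bool" where
  "piE EZero = False" | "piE Kap = True" | "piE Tau = True" | "piE Zeta = False"

text \<open>Vectors of length m over E (resp. F2 = bool): functions vanishing at indices \<ge> m.\<close>
definition Evecs :: "nat \<Rightarrow> (nat \<Rightarrow> E) set" where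
  "Evecs m = {x. \<forall>i\<ge>m. x i = 0}"

definition Fvecs :: "nat \<Rightarrow> (nat \<Rightarrow> bool) set" where
  "Fvecs m = {v. \<forall>i\<ge>m. \<not> v i}"

definition E_linear_code :: "nat \<Rightarrow> (nat \<Rightarrow> E) set \<Rightarrow> bool" where
  "E_linear_code n C \<longleftrightarrow> C \<subseteq> Evecs (2*n) \<and> (\<lambda>i. 0) \<in> C
     \<and> (\<forall>x\<in>C. \<forall>y\<in>C. (\<lambda>i. x i + y i) \<in> C)
     \<and> (\<forall>e::E. \<forall>x\<in>C. (\<lambda>i. e * x i) \<in> C)"

definition C_Res :: "(nat \<Rightarrow> E) set \<Rightarrow> (nat \<Rightarrow> bool) set" where
  "C_Res C = (\<lambda>x. \<lambda>i. piE (x i)) ` C"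

definition zeta_vec :: "(nat \<Rightarrow> bool) \<Rightarrow> (nat \<Rightarrow> E)" where
  "zeta_vec v = (\<lambda>i. if v i then Zeta else 0)"

definition C_Tor :: "nat \<Rightarrow> (nat \<Rightarrow> E) set \<Rightarrow> (nat \<Rightarrow> bool) set" where
  "C_Tor n C = {v \<in> Fvecs (2*n). zeta_vec v \<in> C}"

definition free_code :: "nat \<Rightarrow> (nat \<Rightarrow> E) set \<Rightarrow> bool" where
  "free_code n C \<longleftrightarrow> C_Res C = C_Tor n C"

text \<open>Symplectic inner product on E^(2n), x = (u|v): u = first n coordinates, v = last n.\<close>
definition symp :: "nat \<Rightarrow> (nat \<Rightarrow> E) \<Rightarrow> (nat \<Rightarrow> E) \<Rightarrow> E" where
  "symp n x y = (\<Sum>i<n. x i * y (n + i)) + (\<Sum>i<n. x (n + i) * y i)"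

definition symp_dual :: "nat \<Rightarrow> (nat \<Rightarrow> E) set \<Rightarrow> (nat \<Rightarrow> E) set" where
  "symp_dual n C = {z \<in> Evecs (2*n). \<forall>w\<in>C. symp n z w = 0 \<and> symp n w z = 0}"

definition SHull :: "nat \<Rightarrow> (nat \<Rightarrow> E) set \<Rightarrow> (nat \<Rightarrow> E) set" where
  "SHull n C = C \<inter> symp_dual n C"

end

theory Submission
  imports Defs
begin

text \<open>Left multiplication by e sees only the residue pi of the right factor, and the residue of
  the symplectic form is the binary symplectic form of the residues, hence symmetric. The hull
  is again a linear code, and every linear code D has Res(D) contained in Tor(D), because
  zeta x is the zeta-vector of pi(x) and lies in D for x in D. For the reverse inclusion, let
  zeta v lie in the hull. Freeness gives y in C with pi(y) = v, and zeta y being orthogonal to C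
  says that symp(y, w), hence by symmetry symp(w, y), has zero residue for all w in C. Freeness also splits every w in C as
  kappa w + zeta y' with y' in C, whence symp(w, y) = kappa symp(w, y) + zeta symp(y', y) = 0.
  So kappa y lies in the hull and has residue v.\<close>

lemma times_E_eq: "(e::E) * a = (if piE a then e else 0)"
  by (cases a) (auto simp: zero_E_def)

lemma E_nonzero [simp]: "Kap \<noteq> 0" "Tau \<noteq> 0" "Zeta \<noteq> 0"
  by (simp_all add: zero_E_def)

lemma times_E_eq_0_iff: "(e::E) * a = 0 \<longleftrightarrow> e = 0 \<or> \<not> piE a"
  by (simp add: times_E_eq)

lemma times_E_0_right [simp]: "(e::E) * 0 = 0"
  by (simp add: zero_E_def)

lemma times_E_0_left [simp]: "0 * (a::E) = 0"
  by (simp add: times_E_eq)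

lemma piE_0 [simp]: "\<not> piE 0"
  by (simp add: zero_E_def)

lemma piE_add: "piE (a + b) \<longleftrightarrow> piE a \<noteq> piE b"
  by (cases a; cases b; simp add: zero_E_def)

lemma piE_times: "piE (a * b) \<longleftrightarrow> piE a \<and> piE b"
  by (simp add: times_E_eq)

lemma distrib_left_E: "(e::E) * (a + b) = e * a + e * b"
  by (cases e; cases a; cases b; simp add: zero_E_def)

lemma distrib_right_E: "((a::E) + b) * c = a * c + b * c"
  by (cases c; simp add: zero_E_def)

lemma mult_assoc_E: "((e::E) * a) * b = e * (a * b)"
  by (cases a; cases b; simp add: zero_E_def)

lemma sum_distrib_left_E: "(e::E) * (\<Sum>i\<in>A. f i) = (\<Sum>i\<in>A. e * f i)"
  by (induction A rule: infinite_finite_induct) (simp_all add: distrib_left_E)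

lemma Kap_times_eq: "Kap * a = Kap * b \<longleftrightarrow> piE a = piE b"
  by (simp add: times_E_eq zero_E_def)

definition residue :: "(nat \<Rightarrow> E) \<Rightarrow> nat \<Rightarrow> bool" where
  "residue x = (\<lambda>i. piE (x i))"

lemma C_Res_eq: "C_Res C = residue ` C"
  by (simp add: C_Res_def residue_def)

lemma zeta_vec_residue: "zeta_vec (residue x) = (\<lambda>i. Zeta * x i)"
  by (auto simp: zeta_vec_def residue_def times_E_eq)

lemma residue_scale: "residue (\<lambda>i. e * x i) = (if piE e then residue x else (\<lambda>_. False))"
  by (auto simp: residue_def piE_times)

lemma residue_in_Fvecs: "x \<in> Evecs m \<Longrightarrow> residue x \<in> Fvecs m"
  by (simp add: Evecs_def Fvecs_def residue_def)

lemma zeta_vec_nonzero: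
  assumes "\<And>i. \<not> piE (z i)"
  shows "zeta_vec (\<lambda>i. z i \<noteq> 0) = z"
proof
  fix i show "zeta_vec (\<lambda>i. z i \<noteq> 0) i = z i"
    using assms[of i] by (cases "z i") (simp_all add: zeta_vec_def zero_E_def)
qed

lemma symp_scale_left: "symp n (\<lambda>i. e * x i) y = e * symp n x y"
  by (simp add: symp_def distrib_left_E sum_distrib_left_E mult_assoc_E)

lemma symp_add_left: "symp n (\<lambda>i. x i + x' i) y = symp n x y + symp n x' y"
  by (simp add: symp_def distrib_right_E sum.distrib ac_simps)

lemma symp_add_right: "symp n x (\<lambda>i. y i + y' i) = symp n x y + symp n x y'"
  by (simp add: symp_def distrib_left_E sum.distrib ac_simps)

lemma symp_residue_right: "residue y = residue y' \<Longrightarrow> symp n x y = symp n x y'"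
  by (simp add: symp_def times_E_eq residue_def fun_eq_iff)

lemma symp_zero_right: "symp n x (\<lambda>_. 0) = 0"
  by (simp add: symp_def)

lemma symp_scale_right: "symp n x (\<lambda>i. e * y i) = (if piE e then symp n x y else 0)"
proof (cases "piE e")
  case True
  then have "symp n x (\<lambda>i. e * y i) = symp n x y"
    by (intro symp_residue_right) (simp add: residue_scale)
  with True show ?thesis by simp
next
  case False
  then have "symp n x (\<lambda>i. e * y i) = symp n x (\<lambda>_. 0)"
    by (intro symp_residue_right) (simp add: residue_scale residue_def)
  with False show ?thesis by (simp add: symp_zero_right)
qed

lemma piE_symp_commute: "piE (symp n x y) = piE (symp n y x)"
proof -
  have Kap_times_times: "Kap * (a * b) = Kap * (b * a)" for a b :: E
    by (simp add: times_E_eq conj_commute zero_E_def)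
  have "Kap * symp n x y = Kap * symp n y x"
    by (simp add: symp_def distrib_left_E sum_distrib_left_E Kap_times_times add.commute)
  then show ?thesis by (simp add: Kap_times_eq)
qed

lemma E_linear_code_SHull:
  assumes "E_linear_code n C"
  shows "E_linear_code n (SHull n C)"
proof -
  have "(\<lambda>i. 0) \<in> symp_dual n C"
    by (simp add: symp_dual_def Evecs_def symp_zero_right symp_def)
  moreover have "(\<lambda>i. x i + y i) \<in> symp_dual n C"
    if "x \<in> symp_dual n C" "y \<in> symp_dual n C" for x y
    using that by (auto simp: symp_dual_def Evecs_def symp_add_left symp_add_right)
  moreover have "(\<lambda>i. e * x i) \<in> symp_dual n C" if "x \<in> symp_dual n C" for e x
    using that by (auto simp: symp_dual_def Evecs_def symp_scale_left symp_scale_right)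
  ultimately show ?thesis
    using assms by (auto simp: E_linear_code_def SHull_def)
qed

lemma C_Res_subset_C_Tor:
  assumes "E_linear_code n C"
  shows "C_Res C \<subseteq> C_Tor n C"
proof
  fix v assume "v \<in> C_Res C"
  then obtain x where "x \<in> C" and v: "v = residue x"
    by (auto simp: C_Res_eq)
  with assms have "(\<lambda>i. Zeta * x i) \<in> C" and "x \<in> Evecs (2*n)"
    by (auto simp: E_linear_code_def)
  then show "v \<in> C_Tor n C"
    by (simp add: C_Tor_def v zeta_vec_residue residue_in_Fvecs)
qed

lemma free_code_iff:
  assumes "E_linear_code n C"
  shows "free_code n C \<longleftrightarrow> C_Tor n C \<subseteq> C_Res C"
  using C_Res_subset_C_Tor[OF assms] by (auto simp: free_code_def)

lemma free_code_decompose: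
  assumes "E_linear_code n C" "free_code n C" "w \<in> C"
  obtains y where "y \<in> C" "w = (\<lambda>i. Kap * w i + Zeta * y i)"
proof -
  define z where "z = (\<lambda>i. w i + Kap * w i)"
  have "z \<in> C" and "w \<in> Evecs (2*n)"
    using assms by (auto simp: E_linear_code_def z_def)
  have z_residue: "\<not> piE (z i)" for i
    by (simp add: z_def piE_add piE_times)
  have "(\<lambda>i. z i \<noteq> 0) \<in> C_Tor n C"
    using \<open>z \<in> C\<close> \<open>w \<in> Evecs (2*n)\<close> zeta_vec_nonzero[of z] z_residue
    by (auto simp: C_Tor_def Fvecs_def Evecs_def z_def)
  then obtain y where "y \<in> C" and "(\<lambda>i. z i \<noteq> 0) = residue y"
    using assms(2) by (auto simp: free_code_def C_Res_eq)
  then have "z = zeta_vec (residue y)"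
    using zeta_vec_nonzero[of z] z_residue by metis
  then have "z = (\<lambda>i. Zeta * y i)"
    by (simp add: zeta_vec_residue)
  moreover have "w i = Kap * w i + z i" for i
    by (cases "w i") (simp_all add: z_def zero_E_def)
  ultimately have "w = (\<lambda>i. Kap * w i + Zeta * y i)"
    by auto
  with \<open>y \<in> C\<close> show thesis by (rule that)
qed

lemma free_code_symp_eq_0:
  assumes "E_linear_code n C" "free_code n C" "w \<in> C"
    and residue_orth: "\<And>w'. w' \<in> C \<Longrightarrow> \<not> piE (symp n w' y)"
  shows "symp n w y = 0"
proof -
  obtain y' where "y' \<in> C" and w: "w = (\<lambda>i. Kap * w i + Zeta * y' i)"
    using free_code_decompose[OF assms(1-3)] .
  have "symp n w y = Kap * symp n w y + Zeta * symp n y' y"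
    by (subst w) (simp add: symp_add_left symp_scale_left)
  also have "\<dots> = 0"
    using residue_orth[OF \<open>w \<in> C\<close>] residue_orth[OF \<open>y' \<in> C\<close>] by (simp add: times_E_eq)
  finally show ?thesis .
qed

lemma C_Tor_SHull_subset_C_Res:
  assumes "E_linear_code n C" "free_code n C"
  shows "C_Tor n (SHull n C) \<subseteq> C_Res (SHull n C)"
proof
  fix v assume v_hull: "v \<in> C_Tor n (SHull n C)"
  then have "v \<in> C_Tor n C"
    by (auto simp: C_Tor_def SHull_def)
  then obtain y where "y \<in> C" and v_eq: "v = residue y"
    using assms(2) by (auto simp: free_code_def C_Res_eq)
  have "symp n (\<lambda>i. Zeta * y i) w = 0" if "w \<in> C" for w
    using v_hull that by (simp add: C_Tor_def SHull_def symp_dual_def v_eq zeta_vec_residue)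
  then have residue_orth_left: "\<not> piE (symp n y w)" if "w \<in> C" for w
    using that by (simp add: symp_scale_left times_E_eq_0_iff)
  then have residue_orth_right: "\<not> piE (symp n w y)" if "w \<in> C" for w
    using that piE_symp_commute by metis
  define x where "x = (\<lambda>i. Kap * y i)"
  have "x \<in> C" and "x \<in> Evecs (2*n)"
    using assms(1) \<open>y \<in> C\<close> by (auto simp: E_linear_code_def x_def)
  have "residue x = residue y"
    by (simp add: x_def residue_scale)
  have "symp n x w = 0 \<and> symp n w x = 0" if "w \<in> C" for w
  proof
    show "symp n x w = 0"
      using residue_orth_left[OF that] unfolding x_def symp_scale_left by (simp add: times_E_eq)
    show "symp n w x = 0"
      using free_code_symp_eq_0[OF assms that residue_orth_right] symp_residue_right[OF \<open>residue x = residue y\<close>]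
      by simp
  qed
  with \<open>x \<in> C\<close> \<open>x \<in> Evecs (2*n)\<close> have "x \<in> SHull n C"
    by (simp add: SHull_def symp_dual_def)
  then have "residue x \<in> residue ` SHull n C"
    by (rule imageI)
  then show "v \<in> C_Res (SHull n C)"
    by (simp only: C_Res_eq v_eq \<open>residue x = residue y\<close>)
qed

theorem mainTheorem15:
  fixes n :: nat and C :: "(nat \<Rightarrow> E) set"
  assumes "E_linear_code n C" and "free_code n C"
  shows "free_code n (SHull n C)"
  using free_code_iff[OF E_linear_code_SHull[OF assms(1)]] C_Tor_SHull_subset_C_Res[OF assms]
  by simp

end
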